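(* Let $G$ be a star graph on $n+1$ vertices (one center vertex adjacent to $n$ leaves and no other edges), and let $\Delta$ be the Stanley–Reisner complex of $\mathcal{F}(G)$ (the independence complex of $G$). Then $$\mu_2(\Delta,t)=t^2\sum_{i=1}^{n-2}\binom{n}{i+2}t^i=t^2\sum_{i=1}^{n-2}f_{i+1}t^i,$$ where $f_k$ is the number of $k$-dimensional faces of $\Delta$.
   Context: For a graph $G$ on $[N]$, $\mathcal{F}(G)=(x_ix_j:\{i,j\}\in E(G))\subset\mathbb{K}[x_1,\dots,x_N]$; its Stanley–Reisner complex is the simplicial complex whose faces are the sets $\tau$ with $x_\tau=\prod_{j\in\tau}x_j\notin\mathcal{F}(G)$ (the independent sets). For an ideal $I$, the $m$-th symbolic defect is $\mathrm{sdefect}(I,m)=\mu(I^{(m)}/I^m)$, where $\mu$ is the minimal number of generators and, for squarefree monomial $I$, $I^{(m)}=\bigcap_{P\in\mathrm{Ass}(I)}P^m$. For a $d$-dimensional simplicial complex $\Delta$, let $\Delta^{[i]}$ be the simplicial complex whose facets are the $i$-dimensional faces of $\Delta$, and $\mathcal{F}(\Delta^{[i]})$ its facet ideal (generated by $x_\sigma$ for $\sigma$ an $i$-face). The $m$-th symbolic defect polynomial is $\mu_m(\Delta,t)=t^2\sum_{i=1}^{d-1}\mathrm{sdefect}(\mathcal{F}(\Delta^{[i]}),m)\,t^i$. *)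

theory Defs
  imports Main "HOL-Library.Poly_Mapping" "HOL-Computational_Algebra.Polynomial"
begin

definition ideal_span :: "'r::comm_ring_1 set \<Rightarrow> 'r set" where
  "ideal_span S = {(\<Sum>s\<in>F. r s * s) | F r. finite F \<and> F \<subseteq> S}"

definition is_ideal :: "'r::comm_ring_1 set \<Rightarrow> bool" where
  "is_ideal I \<longleftrightarrow> 0 \<in> I \<and> (\<forall>x\<in>I. \<forall>y\<in>I. x + y \<in> I) \<and> (\<forall>r. \<forall>x\<in>I. r * x \<in> I)"

definition prime_ideal :: "'r::comm_ring_1 set \<Rightarrow> bool" where
  "prime_ideal P \<longleftrightarrow> is_ideal P \<and> 1 \<notin> P \<and> (\<forall>a b. a * b \<in> P \<longrightarrow> a \<in> P \<or> b \<in> P)"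

definition ass_primes :: "'r::comm_ring_1 set \<Rightarrow> 'r set set" where
  "ass_primes I = {P. prime_ideal P \<and> (\<exists>f. P = {g. g * f \<in> I})}"

definition ideal_pow :: "'r::comm_ring_1 set \<Rightarrow> nat \<Rightarrow> 'r set" where
  "ideal_pow I m = ideal_span {prod_list xs | xs. length xs = m \<and> set xs \<subseteq> I}"

definition symbolic_power :: "'r::comm_ring_1 set \<Rightarrow> nat \<Rightarrow> 'r set" where
  "symbolic_power I m = (\<Inter>P\<in>ass_primes I. ideal_pow P m)"

text \<open>Minimal number of generators of the module J/I (for ideals I \<subseteq> J).\<close>
definition mu_quot :: "'r::comm_ring_1 set \<Rightarrow> 'r set \<Rightarrow> nat" where
  "mu_quot J I = (LEAST k. \<exists>S. finite S \<and> card S = k \<and> S \<subseteq> J \<and> ideal_span (S \<union> I) = J)"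

definition sdefect :: "'r::comm_ring_1 set \<Rightarrow> nat \<Rightarrow> nat" where
  "sdefect I m = mu_quot (symbolic_power I m) (ideal_pow I m)"

definition var :: "'v \<Rightarrow> (('v \<Rightarrow>\<^sub>0 nat) \<Rightarrow>\<^sub>0 'k::field)" where
  "var v = Poly_Mapping.single (Poly_Mapping.single v 1) 1"

definition sqmon :: "'v set \<Rightarrow> (('v \<Rightarrow>\<^sub>0 nat) \<Rightarrow>\<^sub>0 'k::field)" where
  "sqmon \<tau> = (\<Prod>v\<in>\<tau>. var v)"

definition edge_ideal :: "'v set set \<Rightarrow> (('v \<Rightarrow>\<^sub>0 nat) \<Rightarrow>\<^sub>0 'k::field) set" where
  "edge_ideal E = ideal_span {var u * var v | u v. {u, v} \<in> E}"

definition sr_complex :: "(('v::finite \<Rightarrow>\<^sub>0 nat) \<Rightarrow>\<^sub>0 'k::field) set \<Rightarrow> 'v set set" where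
  "sr_complex I = {\<tau>. sqmon \<tau> \<notin> I}"

definition cdim :: "'v set set \<Rightarrow> nat" where
  "cdim \<Delta> = Max (card ` \<Delta>) - 1"

text \<open>Facet ideal of \<Delta>^[i]: generated by x_\<sigma> for the i-dimensional faces \<sigma>.\<close>
definition skel_ideal :: "'v set set \<Rightarrow> nat \<Rightarrow> (('v \<Rightarrow>\<^sub>0 nat) \<Rightarrow>\<^sub>0 'k::field) set" where
  "skel_ideal \<Delta> i = ideal_span {sqmon \<sigma> | \<sigma>. \<sigma> \<in> \<Delta> \<and> card \<sigma> = i + 1}"

definition fvec :: "'v set set \<Rightarrow> nat \<Rightarrow> nat" where
  "fvec \<Delta> k = card {\<sigma>\<in>\<Delta>. card \<sigma> = k + 1}"

definition sdefect_poly :: "'k::field itself \<Rightarrow> 'v set set \<Rightarrow> nat \<Rightarrow> int poly" where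
  "sdefect_poly K \<Delta> m = monom 1 2 *
     (\<Sum>i\<in>{1..cdim \<Delta> - 1}. monom (int (sdefect (skel_ideal \<Delta> i :: (('v \<Rightarrow>\<^sub>0 nat) \<Rightarrow>\<^sub>0 'k) set) m)) i)"

end

(* The independence complex of the star with centre c consists of all subsets of the leaf set L
   (|L| = n) together with {c}. Hence for i >= 1 its i-skeleton facet ideal is the squarefree
   Veronese ideal I generated by the squarefree monomials of degree d = i + 1 in the leaves, and
   f_(i+1) = C(n, i+2).

   The associated primes of I are the ideals P_A = (x_j : j in A) for the (n - d + 1)-subsets A
   of L, so I^(2) is the intersection of the P_A^2. A monomial lies in every P_A^2 iff it is
   divisible by some x_tau with |tau| = d + 1 or by some x_sigma^2 with |sigma| = d; the latter
   lie in I^2, so the C(n, d+1) monomials x_tau generate I^(2) modulo I^2. Fewer generators do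
   not suffice: I^2 lives in degrees >= 2d > d + 1 and I^(2) in degrees >= d + 1, so comparing
   coefficients in degree d + 1 turns any generating set into a spanning set of the
   C(n, d+1)-dimensional space of squarefree monomials x_tau. *)

theory Submission
  imports Defs "HOL-Library.Function_Algebras"
begin

section \<open>Ideals of a commutative ring\<close>

lemma ideal_spanE:
  assumes "x \<in> ideal_span S"
  obtains F r where "finite F" "F \<subseteq> S" "x = (\<Sum>s\<in>F. r s * s)"
  using assms unfolding ideal_span_def by blast

lemma ideal_spanI: "finite F \<Longrightarrow> F \<subseteq> S \<Longrightarrow> (\<Sum>s\<in>F. r s * s) \<in> ideal_span S"
  unfolding ideal_span_def by blast

lemma mem_ideal_span: "s \<in> S \<Longrightarrow> s \<in> ideal_span (S :: 'r::comm_ring_1 set)"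
  using ideal_spanI[of "{s}" S "\<lambda>_. 1"] by simp

lemma is_ideal_add: "is_ideal K \<Longrightarrow> x \<in> K \<Longrightarrow> y \<in> K \<Longrightarrow> x + y \<in> K"
  by (simp add: is_ideal_def)

lemma is_ideal_mult_left: "is_ideal K \<Longrightarrow> x \<in> K \<Longrightarrow> r * x \<in> K"
  by (simp add: is_ideal_def)

lemma is_ideal_mult_right: "is_ideal K \<Longrightarrow> x \<in> K \<Longrightarrow> x * r \<in> K"
  by (simp add: is_ideal_def mult.commute)

lemma is_ideal_diff: "is_ideal K \<Longrightarrow> x \<in> K \<Longrightarrow> y \<in> K \<Longrightarrow> x - y \<in> K"
  using is_ideal_add[of K x "- 1 * y"] is_ideal_mult_left[of K y "- 1"] by simp

lemma is_ideal_sum: "is_ideal K \<Longrightarrow> (\<And>x. x \<in> F \<Longrightarrow> g x \<in> K) \<Longrightarrow> sum g F \<in> K"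
  by (induction F rule: infinite_finite_induct) (simp_all add: is_ideal_def)

lemma is_ideal_Inter: "(\<And>P. P \<in> X \<Longrightarrow> is_ideal P) \<Longrightarrow> is_ideal (\<Inter> X)"
  unfolding is_ideal_def by blast

lemma is_ideal_colon: "is_ideal K \<Longrightarrow> is_ideal {g. g * f \<in> K}"
  unfolding is_ideal_def by (auto simp: distrib_right mult.assoc)

lemma is_ideal_ideal_span: "is_ideal (ideal_span (S :: 'r::comm_ring_1 set))"
proof -
  have "x + y \<in> ideal_span S" if "x \<in> ideal_span S" "y \<in> ideal_span S" for x y
  proof -
    obtain F r where F: "finite F" "F \<subseteq> S" "x = (\<Sum>s\<in>F. r s * s)"
      using \<open>x \<in> ideal_span S\<close> by (rule ideal_spanE)
    obtain G q where G: "finite G" "G \<subseteq> S" "y = (\<Sum>s\<in>G. q s * s)"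
      using \<open>y \<in> ideal_span S\<close> by (rule ideal_spanE)
    have "x = (\<Sum>s\<in>F \<union> G. (if s \<in> F then r s else 0) * s)"
      unfolding F(3) by (rule sum.mono_neutral_cong_right[symmetric]) (use F G in auto)
    moreover have "y = (\<Sum>s\<in>F \<union> G. (if s \<in> G then q s else 0) * s)"
      unfolding G(3) by (rule sum.mono_neutral_cong_right[symmetric]) (use F G in auto)
    ultimately have "x + y = (\<Sum>s\<in>F \<union> G. ((if s \<in> F then r s else 0) + (if s \<in> G then q s else 0)) * s)"
      by (simp add: distrib_right sum.distrib)
    then show ?thesis
      using F G by (simp add: ideal_spanI)
  qed
  moreover have "a * x \<in> ideal_span S" if "x \<in> ideal_span S" for a x
  proof -
    obtain F r where F: "finite F" "F \<subseteq> S" "x = (\<Sum>s\<in>F. r s * s)"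
      using \<open>x \<in> ideal_span S\<close> by (rule ideal_spanE)
    then have "a * x = (\<Sum>s\<in>F. (a * r s) * s)"
      by (simp add: sum_distrib_left mult.assoc)
    then show ?thesis
      using F by (simp add: ideal_spanI)
  qed
  moreover have "0 \<in> ideal_span S"
    using ideal_spanI[of "{}" S] by simp
  ultimately show ?thesis
    unfolding is_ideal_def by blast
qed

lemma ideal_span_subset: "is_ideal K \<Longrightarrow> S \<subseteq> K \<Longrightarrow> ideal_span S \<subseteq> K"
  by (auto elim!: ideal_spanE intro!: is_ideal_sum is_ideal_mult_left)

lemma ideal_span_mono: "S \<subseteq> T \<Longrightarrow> ideal_span S \<subseteq> ideal_span (T :: 'r::comm_ring_1 set)"
  by (rule ideal_span_subset[OF is_ideal_ideal_span]) (use mem_ideal_span in blast)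

lemma is_ideal_ideal_pow: "is_ideal (ideal_pow P m)"
  unfolding ideal_pow_def by (rule is_ideal_ideal_span)

lemma ideal_pow_mono: "P \<subseteq> Q \<Longrightarrow> ideal_pow P m \<subseteq> ideal_pow Q m"
  unfolding ideal_pow_def by (rule ideal_span_mono) blast

lemma mult_mem_ideal_pow_2: "x \<in> P \<Longrightarrow> y \<in> P \<Longrightarrow> x * y \<in> ideal_pow P 2"
  unfolding ideal_pow_def
  by (rule mem_ideal_span) (auto intro!: exI[of _ "[x, y]"] simp: numeral_2_eq_2)

lemma ideal_pow_2_subset:
  assumes "is_ideal K" and "\<And>x y. x \<in> P \<Longrightarrow> y \<in> P \<Longrightarrow> x * y \<in> K"
  shows "ideal_pow P 2 \<subseteq> K"
  unfolding ideal_pow_def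
proof (rule ideal_span_subset[OF \<open>is_ideal K\<close>], clarify)
  fix xs :: "'a list" assume "length xs = 2" "set xs \<subseteq> P"
  then obtain x y where "xs = [x, y]" "x \<in> P" "y \<in> P"
    by (auto simp: numeral_2_eq_2 length_Suc_conv)
  then show "prod_list xs \<in> K"
    using assms(2) by simp
qed

lemma prime_ideal_prod_mem:
  assumes "prime_ideal P" "finite F" "prod g F \<in> P"
  shows "\<exists>x\<in>F. g x \<in> P"
  using assms(2,3) by (induction F rule: finite_induct) (use assms(1) in \<open>auto simp: prime_ideal_def\<close>)

lemma is_ideal_symbolic_power: "is_ideal (symbolic_power I m)"
  unfolding symbolic_power_def by (rule is_ideal_Inter) (auto intro: is_ideal_ideal_pow)

lemma ideal_pow_subset_symbolic_power:
  assumes "is_ideal I"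
  shows "ideal_pow I m \<subseteq> symbolic_power I m"
proof -
  have "I \<subseteq> P" if "P \<in> ass_primes I" for P
    using that is_ideal_mult_right[OF assms] unfolding ass_primes_def by blast
  then show ?thesis
    unfolding symbolic_power_def using ideal_pow_mono by blast
qed

lemma mu_quot_eqI:
  assumes "finite S" "card S = k" "S \<subseteq> J" "ideal_span (S \<union> I) = J"
    and "\<And>S. finite S \<Longrightarrow> S \<subseteq> J \<Longrightarrow> ideal_span (S \<union> I) = J \<Longrightarrow> k \<le> card S"
  shows "mu_quot J I = k"
  unfolding mu_quot_def by (rule Least_equality) (use assms in blast)+

section \<open>Monomials and monomial ideals\<close>

type_synonym ('v, 'k) mpoly = "('v \<Rightarrow>\<^sub>0 nat) \<Rightarrow>\<^sub>0 'k"

definition mon :: "('v \<Rightarrow>\<^sub>0 nat) \<Rightarrow> ('v, 'k::field) mpoly" where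
  "mon a = Poly_Mapping.single a 1"

definition sqfree_exp :: "'v set \<Rightarrow> 'v \<Rightarrow>\<^sub>0 nat" where
  "sqfree_exp \<sigma> = (\<Sum>v\<in>\<sigma>. Poly_Mapping.single v 1)"

text \<open>For upward closed \<open>U\<close> this is the ideal spanned by the monomials \<open>x\<^sup>a\<close> with \<open>U a\<close>.\<close>

definition monomial_ideal :: "(('v \<Rightarrow>\<^sub>0 nat) \<Rightarrow> bool) \<Rightarrow> ('v, 'k::field) mpoly set" where
  "monomial_ideal U = {f. \<forall>a\<in>Poly_Mapping.keys f. U a}"

definition restrict_keys :: "(('v \<Rightarrow>\<^sub>0 nat) \<Rightarrow> bool) \<Rightarrow> ('v, 'k::field) mpoly \<Rightarrow> ('v, 'k) mpoly" where
  "restrict_keys U f = Poly_Mapping.mapp (\<lambda>a c. if U a then c else 0) f"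

lemma mon_mult: "mon a * mon b = (mon (a + b) :: ('v, 'k::field) mpoly)"
  by (simp add: mon_def mult_single)

lemma keys_mon [simp]: "Poly_Mapping.keys (mon a :: ('v, 'k::field) mpoly) = {a}"
  by (simp add: mon_def)

lemma mon_inject: "(mon a :: ('v, 'k::field) mpoly) = mon b \<longleftrightarrow> a = b"
  by (metis keys_mon singleton_inject)

lemma var_eq_mon: "var v = mon (Poly_Mapping.single v 1)"
  by (simp add: var_def mon_def)

lemma sqmon_eq_mon: "finite \<sigma> \<Longrightarrow> sqmon \<sigma> = (mon (sqfree_exp \<sigma>) :: ('v, 'k::field) mpoly)"
  by (induction \<sigma> rule: finite_induct)
    (simp_all add: sqmon_def sqfree_exp_def mon_def var_eq_mon mult_single add.commute)

lemma lookup_sqfree_exp: "finite \<sigma> \<Longrightarrow> Poly_Mapping.lookup (sqfree_exp \<sigma>) v = (if v \<in> \<sigma> then 1 else 0)"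
  by (simp add: sqfree_exp_def lookup_sum lookup_single when_def)

lemma sqfree_exp_inject:
  assumes "finite \<sigma>" "finite \<tau>"
  shows "sqfree_exp \<sigma> = sqfree_exp \<tau> \<longleftrightarrow> \<sigma> = \<tau>"
proof
  assume "sqfree_exp \<sigma> = sqfree_exp \<tau>"
  then have "v \<in> \<sigma> \<longleftrightarrow> v \<in> \<tau>" for v
    using lookup_sqfree_exp[OF assms(1), of v] lookup_sqfree_exp[OF assms(2), of v]
    by (cases "v \<in> \<sigma>"; cases "v \<in> \<tau>") simp_all
  then show "\<sigma> = \<tau>"
    by blast
qed simp

lemma sqmon_inject:
  fixes \<sigma> \<tau> :: "'v::finite set"
  shows "(sqmon \<sigma> :: ('v, 'k::field) mpoly) = sqmon \<tau> \<longleftrightarrow> \<sigma> = \<tau>"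
  by (simp add: sqmon_eq_mon mon_inject sqfree_exp_inject)

lemma sqmon_insert: "j \<notin> \<sigma> \<Longrightarrow> finite \<sigma> \<Longrightarrow> sqmon (insert j \<sigma>) = (var j * sqmon \<sigma> :: ('v, 'k::field) mpoly)"
  by (simp add: sqmon_def)

lemma sqmon_remove2:
  assumes "finite \<sigma>" "j \<in> \<sigma>" "k \<in> \<sigma>" "j \<noteq> k"
  shows "sqmon \<sigma> = (var j * var k) * (sqmon (\<sigma> - {j, k}) :: ('v, 'k::field) mpoly)"
proof -
  define R where "R = \<sigma> - {j, k}"
  have "\<sigma> = insert j (insert k R)" "j \<notin> insert k R" "k \<notin> R" "finite R"
    using assms by (auto simp: R_def)
  then show ?thesis
    unfolding sqmon_def R_def[symmetric] by (simp add: mult.assoc)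
qed

lemma is_ideal_monomial_ideal:
  assumes "\<And>a b. U a \<Longrightarrow> U (b + a)"
  shows "is_ideal (monomial_ideal U :: ('v, 'k::field) mpoly set)"
proof -
  have "f + g \<in> monomial_ideal U" if "f \<in> monomial_ideal U" "g \<in> monomial_ideal U" for f g :: "('v, 'k) mpoly"
    using that keys_add[of f g] unfolding monomial_ideal_def by blast
  moreover have "r * f \<in> monomial_ideal U" if "f \<in> monomial_ideal U" for r f :: "('v, 'k) mpoly"
    using that keys_mult[of r f] assms unfolding monomial_ideal_def by blast
  moreover have "0 \<in> monomial_ideal U"
    by (simp add: monomial_ideal_def)
  ultimately show ?thesis
    unfolding is_ideal_def by blast
qed

lemma mon_mem_monomial_ideal [simp]: "mon a \<in> monomial_ideal U \<longleftrightarrow> U a"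
  by (simp add: monomial_ideal_def)

lemma monomial_ideal_mono: "(\<And>a. U a \<Longrightarrow> V a) \<Longrightarrow> monomial_ideal U \<subseteq> monomial_ideal V"
  unfolding monomial_ideal_def by blast

lemma monomial_ideal_mult:
  assumes "f \<in> monomial_ideal U" "g \<in> monomial_ideal V" "\<And>a b. U a \<Longrightarrow> V b \<Longrightarrow> W (a + b)"
  shows "f * g \<in> (monomial_ideal W :: ('v, 'k::field) mpoly set)"
  using assms keys_mult[of f g] unfolding monomial_ideal_def by auto

lemma monomial_ideal_disjoint:
  assumes "f \<in> monomial_ideal U" "f \<in> monomial_ideal (\<lambda>a. \<not> U a)"
  shows "f = 0"
proof -
  have "Poly_Mapping.keys f = {}"
    using assms by (auto simp: monomial_ideal_def)
  then show ?thesis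
    by simp
qed

lemma lookup_restrict_keys: "Poly_Mapping.lookup (restrict_keys U f) a = (if U a then Poly_Mapping.lookup f a else 0)"
  by (simp add: restrict_keys_def lookup_mapp when_def in_keys_iff)

lemma restrict_keys_mem: "restrict_keys U f \<in> monomial_ideal U"
  by (auto simp: monomial_ideal_def in_keys_iff lookup_restrict_keys split: if_splits)

lemma restrict_keys_split: "f = restrict_keys U f + restrict_keys (\<lambda>a. \<not> U a) f"
  by (rule poly_mapping_eqI) (simp add: lookup_add lookup_restrict_keys)

lemma diff_restrict_keys_mem: "f - restrict_keys (\<lambda>a. \<not> U a) f \<in> monomial_ideal U"
proof -
  have "f - restrict_keys (\<lambda>a. \<not> U a) f = restrict_keys U f"
    by (subst diff_eq_eq) (rule restrict_keys_split)
  then show ?thesis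
    by (simp add: restrict_keys_mem)
qed

lemma poly_mapping_sum_single: "f = (\<Sum>a\<in>Poly_Mapping.keys f. Poly_Mapping.single a (Poly_Mapping.lookup f a))"
  by (rule poly_mapping_eqI) (simp add: lookup_sum lookup_single when_def in_keys_iff)

lemma mem_ideal_if_mon_mem:
  assumes "is_ideal K" and "\<And>a. a \<in> Poly_Mapping.keys f \<Longrightarrow> (mon a :: ('v, 'k::field) mpoly) \<in> K"
  shows "f \<in> K"
proof -
  have "Poly_Mapping.single 0 c * mon a \<in> K" if "a \<in> Poly_Mapping.keys f" for a c
    using is_ideal_mult_left[OF assms(1) assms(2)[OF that]] .
  then have "Poly_Mapping.single a c \<in> K" if "a \<in> Poly_Mapping.keys f" for a c
    using that by (simp add: mon_def mult_single)
  then have "(\<Sum>a\<in>Poly_Mapping.keys f. Poly_Mapping.single a (Poly_Mapping.lookup f a)) \<in> K"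
    by (simp add: is_ideal_sum[OF assms(1)])
  then show ?thesis
    using poly_mapping_sum_single[of f] by simp
qed

lemma mon_mem_ideal_if_le:
  assumes "is_ideal K" "(mon b :: ('v, 'k::field) mpoly) \<in> K" "\<And>v. Poly_Mapping.lookup b v \<le> Poly_Mapping.lookup a v"
  shows "(mon a :: ('v, 'k) mpoly) \<in> K"
proof -
  have "(a - b) + b = a"
    by (rule poly_mapping_eqI) (simp add: lookup_add lookup_minus assms(3))
  then have "mon (a - b) * mon b = (mon a :: ('v, 'k) mpoly)"
    by (simp add: mon_mult)
  then show ?thesis
    using is_ideal_mult_left[OF assms(1,2)] by metis
qed

lemma lookup_single_0_mult: "Poly_Mapping.lookup (Poly_Mapping.single 0 c * f) a = c * Poly_Mapping.lookup f a"
  by (simp flip: mult_map_scale_conv_mult add: map.rep_eq when_def)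

lemma lookup_mult_mon: "Poly_Mapping.lookup (g * mon b) (u + b) = Poly_Mapping.lookup (g :: ('v, 'k::field) mpoly) u"
proof -
  have "(\<lambda>q. Poly_Mapping.lookup (mon b :: ('v, 'k) mpoly) q when u + b = l + q) = (\<lambda>q. (1 when l = u) when q = b)" for l
    by (auto simp: fun_eq_iff mon_def lookup_single when_def)
  then have "(\<Sum>q. Poly_Mapping.lookup (mon b :: ('v, 'k) mpoly) q when u + b = l + q) = (1 when l = u)" for l
    by (simp only: Sum_any_when_equal)
  then have "(\<lambda>l. Poly_Mapping.lookup g l * (\<Sum>q. Poly_Mapping.lookup (mon b :: ('v, 'k) mpoly) q when u + b = l + q))
      = (\<lambda>l. Poly_Mapping.lookup g u when l = u)"
    by (auto simp: fun_eq_iff when_def)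
  then show ?thesis
    by (simp only: lookup_mult Sum_any_when_equal)
qed

section \<open>Polynomial rings in finitely many variables are domains\<close>

lemma lookup_mult_max_keys:
  fixes f g :: "'m::comm_monoid_add \<Rightarrow>\<^sub>0 'k::semiring_0"
    and E :: "'m \<Rightarrow> 'o::linordered_cancel_ab_semigroup_add"
  assumes E: "inj E" "\<And>x y. E (x + y) = E x + E y"
    and a: "a \<in> Poly_Mapping.keys f" "\<And>a'. a' \<in> Poly_Mapping.keys f \<Longrightarrow> E a' \<le> E a"
    and b: "\<And>b'. b' \<in> Poly_Mapping.keys g \<Longrightarrow> E b' \<le> E b"
  shows "Poly_Mapping.lookup (f * g) (a + b) = Poly_Mapping.lookup f a * Poly_Mapping.lookup g b"
proof -
  have "Poly_Mapping.lookup f l * (\<Sum>q. Poly_Mapping.lookup g q when a + b = l + q)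
      = (Poly_Mapping.lookup f a * Poly_Mapping.lookup g b when l = a)" for l
  proof (cases "l = a")
    case True
    have "a + b = a + q \<longleftrightarrow> q = b" for q
      using E by (metis add_left_cancel injD)
    then show ?thesis
      using True by (simp add: when_def)
  next
    case False
    have "(Poly_Mapping.lookup g q when a + b = l + q) = 0" if "l \<in> Poly_Mapping.keys f" for q
    proof (cases "q \<in> Poly_Mapping.keys g")
      case True
      have "E l < E a"
        using a(2)[OF that] False E(1) by (metis injD order_neq_le_trans)
      then have "E l + E q < E a + E b"
        using b[OF True] by (rule add_less_le_mono)
      then have "a + b \<noteq> l + q"
        using E(2) by (metis less_irrefl)
      then show ?thesis
        by simp
    qed (simp add: in_keys_iff)
    then show ?thesis
      using False by (cases "l \<in> Poly_Mapping.keys f") (simp_all add: in_keys_iff when_def)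
  qed
  then show ?thesis
    by (simp add: lookup_mult)
qed

lemma mpoly_mult_eq_0_iff:
  fixes f g :: "('v::finite, 'k::field) mpoly"
  shows "f * g = 0 \<longleftrightarrow> f = 0 \<or> g = 0"
proof
  assume "f * g = 0"
  \<comment> \<open>The library's domain instance needs linearly ordered variables; numbering the variables
    embeds the monomials additively into the linearly ordered monoid \<open>nat \<Rightarrow>\<^sub>0 nat\<close>, and
    there the product of the leading terms of \<open>f\<close> and \<open>g\<close> cannot cancel.\<close>
  obtain h :: "'v \<Rightarrow> nat" where "inj h"
    using finite_imp_inj_to_nat_seg[of "UNIV :: 'v set"] by auto
  define E :: "('v \<Rightarrow>\<^sub>0 nat) \<Rightarrow> (nat \<Rightarrow>\<^sub>0 nat)" where
    "E a = (\<Sum>v\<in>UNIV. Poly_Mapping.single (h v) (Poly_Mapping.lookup a v))" for a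
  have E_add: "E (x + y) = E x + E y" for x y
    by (simp add: E_def lookup_add single_add sum.distrib)
  have "Poly_Mapping.lookup (E a) (h w) = Poly_Mapping.lookup a w" for a w
    using \<open>inj h\<close> by (simp add: E_def lookup_sum lookup_single when_def inj_eq sum.delta)
  then have "inj E"
    by (metis injI poly_mapping_eqI)
  have max_key: "\<exists>a\<in>Poly_Mapping.keys p. \<forall>a'\<in>Poly_Mapping.keys p. E a' \<le> E a"
    if "p \<noteq> 0" for p :: "('v, 'k) mpoly"
  proof -
    have "Max (E ` Poly_Mapping.keys p) \<in> E ` Poly_Mapping.keys p"
      using that by (simp add: Max_in)
    then obtain a where "a \<in> Poly_Mapping.keys p" "E a = Max (E ` Poly_Mapping.keys p)"
      by auto
    then show ?thesis
      by (metis Max_ge finite_imageI finite_keys imageI)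
  qed
  show "f = 0 \<or> g = 0"
  proof (rule ccontr)
    assume "\<not> (f = 0 \<or> g = 0)"
    then obtain a b where "a \<in> Poly_Mapping.keys f" "\<forall>a'\<in>Poly_Mapping.keys f. E a' \<le> E a"
      and "b \<in> Poly_Mapping.keys g" "\<forall>b'\<in>Poly_Mapping.keys g. E b' \<le> E b"
      using max_key by meson
    then have "Poly_Mapping.lookup (f * g) (a + b) = Poly_Mapping.lookup f a * Poly_Mapping.lookup g b"
      using lookup_mult_max_keys[OF \<open>inj E\<close> E_add] by blast
    then show False
      using \<open>f * g = 0\<close> \<open>a \<in> _\<close> \<open>b \<in> _\<close> by (simp add: in_keys_iff)
  qed
qed auto

section \<open>Ideals generated by variables\<close>

definition var_ideal :: "'v set \<Rightarrow> ('v, 'k::field) mpoly set" where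
  "var_ideal A = ideal_span (var ` A)"

lemma is_ideal_var_ideal: "is_ideal (var_ideal A)"
  unfolding var_ideal_def by (rule is_ideal_ideal_span)

lemma var_mem_var_ideal: "j \<in> A \<Longrightarrow> var j \<in> var_ideal A"
  unfolding var_ideal_def by (rule mem_ideal_span) blast

lemma var_ideal_eq_monomial_ideal:
  "var_ideal A = (monomial_ideal (\<lambda>a. \<exists>j\<in>A. 0 < Poly_Mapping.lookup a j) :: ('v, 'k::field) mpoly set)"
proof
  show "var_ideal A \<subseteq> (monomial_ideal (\<lambda>a. \<exists>j\<in>A. 0 < Poly_Mapping.lookup a j) :: ('v, 'k) mpoly set)"
    unfolding var_ideal_def
  proof (rule ideal_span_subset[OF is_ideal_monomial_ideal])
    show "\<exists>j\<in>A. 0 < Poly_Mapping.lookup (b + a) j" if "\<exists>j\<in>A. 0 < Poly_Mapping.lookup a j" for a b :: "'v \<Rightarrow>\<^sub>0 nat"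
      using that by (auto simp: lookup_add intro: trans_less_add2)
    show "var ` A \<subseteq> (monomial_ideal (\<lambda>a. \<exists>j\<in>A. 0 < Poly_Mapping.lookup a j) :: ('v, 'k) mpoly set)"
    proof clarify
      fix j assume "j \<in> A"
      then show "var j \<in> (monomial_ideal (\<lambda>a. \<exists>j\<in>A. 0 < Poly_Mapping.lookup a j) :: ('v, 'k) mpoly set)"
        by (simp add: var_eq_mon) (rule bexI[of _ j]; simp)
    qed
  qed
next
  show "monomial_ideal (\<lambda>a. \<exists>j\<in>A. 0 < Poly_Mapping.lookup a j) \<subseteq> (var_ideal A :: ('v, 'k) mpoly set)"
  proof (rule subsetI, rule mem_ideal_if_mon_mem[OF is_ideal_var_ideal])
    fix f :: "('v, 'k) mpoly" and a
    assume "f \<in> monomial_ideal (\<lambda>a. \<exists>j\<in>A. 0 < Poly_Mapping.lookup a j)" "a \<in> Poly_Mapping.keys f"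
    then obtain j where "j \<in> A" "0 < Poly_Mapping.lookup a j"
      by (auto simp: monomial_ideal_def)
    show "(mon a :: ('v, 'k) mpoly) \<in> var_ideal A"
    proof (rule mon_mem_ideal_if_le[OF is_ideal_var_ideal])
      show "mon (Poly_Mapping.single j 1) \<in> (var_ideal A :: ('v, 'k) mpoly set)"
        using var_mem_var_ideal[OF \<open>j \<in> A\<close>] by (simp add: var_eq_mon)
      show "Poly_Mapping.lookup (Poly_Mapping.single j 1) v \<le> Poly_Mapping.lookup a v" for v
        using \<open>0 < Poly_Mapping.lookup a j\<close> by (auto simp: lookup_single when_def)
    qed
  qed
qed

lemma prime_var_ideal: "prime_ideal (var_ideal A :: ('v::finite, 'k::field) mpoly set)"
proof -
  let ?P = "var_ideal A :: ('v, 'k) mpoly set"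
  let ?U = "\<lambda>a. \<exists>j\<in>A. 0 < Poly_Mapping.lookup a j"
  have "mon 0 \<notin> ?P"
    by (simp add: var_ideal_eq_monomial_ideal)
  then have "1 \<notin> ?P"
    by (simp add: mon_def)
  moreover have "x * y \<notin> ?P" if "x \<notin> ?P" "y \<notin> ?P" for x y
  proof
    assume "x * y \<in> ?P"
    \<comment> \<open>The parts \<open>x0\<close>, \<open>y0\<close> of \<open>x\<close>, \<open>y\<close> outside \<open>?P\<close> involve no variable of \<open>A\<close>, hence
      neither does their product, which is nonzero but lies in \<open>?P\<close>.\<close>
    define x0 where "x0 = restrict_keys (\<lambda>a. \<not> ?U a) x"
    define y0 where "y0 = restrict_keys (\<lambda>a. \<not> ?U a) y"
    have "x - x0 \<in> ?P" "y - y0 \<in> ?P"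
      unfolding x0_def y0_def var_ideal_eq_monomial_ideal by (rule diff_restrict_keys_mem)+
    then have "x0 \<noteq> 0" "y0 \<noteq> 0"
      using that by auto
    then have "x0 * y0 \<noteq> 0"
      by (simp add: mpoly_mult_eq_0_iff)
    moreover have "x0 * y0 \<in> monomial_ideal (\<lambda>a. \<not> ?U a)"
      unfolding x0_def y0_def
      by (rule monomial_ideal_mult[OF restrict_keys_mem restrict_keys_mem]) (auto simp: lookup_add)
    moreover have "x0 * y0 \<in> ?P"
    proof -
      have "(x - x0) * y + x0 * (y - y0) \<in> ?P"
        using \<open>x - x0 \<in> ?P\<close> \<open>y - y0 \<in> ?P\<close>
        by (intro is_ideal_add is_ideal_mult_left is_ideal_mult_right is_ideal_var_ideal)
      then have "x * y - ((x - x0) * y + x0 * (y - y0)) \<in> ?P"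
        using \<open>x * y \<in> ?P\<close> by (intro is_ideal_diff is_ideal_var_ideal)
      then show ?thesis
        by (simp add: algebra_simps)
    qed
    ultimately show False
      using monomial_ideal_disjoint[of "x0 * y0" ?U] unfolding var_ideal_eq_monomial_ideal by blast
  qed
  ultimately show ?thesis
    unfolding prime_ideal_def using is_ideal_var_ideal by blast
qed

lemma var_ideal_pow_2_subset:
  "ideal_pow (var_ideal A) 2
     \<subseteq> (monomial_ideal (\<lambda>a. 2 \<le> (\<Sum>j\<in>A. Poly_Mapping.lookup a j)) :: ('v::finite, 'k::field) mpoly set)"
proof (rule ideal_pow_2_subset)
  show "is_ideal (monomial_ideal (\<lambda>a. 2 \<le> (\<Sum>j\<in>A. Poly_Mapping.lookup a j)) :: ('v, 'k) mpoly set)"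
    by (rule is_ideal_monomial_ideal) (simp add: lookup_add sum.distrib)
  have sum_pos: "(1::nat) \<le> (\<Sum>j\<in>A. Poly_Mapping.lookup a j)" if "\<exists>j\<in>A. 0 < Poly_Mapping.lookup a j" for a
    using that member_le_sum[of _ A "Poly_Mapping.lookup a"] by fastforce
  show "x * y \<in> monomial_ideal (\<lambda>a. 2 \<le> (\<Sum>j\<in>A. Poly_Mapping.lookup a j))"
    if "x \<in> var_ideal A" "y \<in> var_ideal A" for x y :: "('v, 'k) mpoly"
    using that unfolding var_ideal_eq_monomial_ideal
  proof (rule monomial_ideal_mult)
    fix a b :: "'v \<Rightarrow>\<^sub>0 nat"
    assume "\<exists>j\<in>A. 0 < Poly_Mapping.lookup a j" "\<exists>j\<in>A. 0 < Poly_Mapping.lookup b j"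
    then show "2 \<le> (\<Sum>j\<in>A. Poly_Mapping.lookup (a + b) j)"
      using sum_pos[of a] sum_pos[of b] by (simp add: lookup_add sum.distrib)
  qed
qed

section \<open>Squarefree Veronese ideals and their associated primes\<close>

definition sqfree_veronese :: "'v set \<Rightarrow> nat \<Rightarrow> ('v, 'k::field) mpoly set" where
  "sqfree_veronese L d = ideal_span {sqmon \<sigma> | \<sigma>. \<sigma> \<subseteq> L \<and> card \<sigma> = d}"

text \<open>The minimal subsets of \<open>L\<close> meeting every \<open>d\<close>-subset of \<open>L\<close>.\<close>

definition transversals :: "'v set \<Rightarrow> nat \<Rightarrow> 'v set set" where
  "transversals L d = {A. A \<subseteq> L \<and> card A = card L - d + 1}"

lemma is_ideal_sqfree_veronese: "is_ideal (sqfree_veronese L d)"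
  unfolding sqfree_veronese_def by (rule is_ideal_ideal_span)

lemma sqmon_mem_sqfree_veronese: "\<sigma> \<subseteq> L \<Longrightarrow> card \<sigma> = d \<Longrightarrow> sqmon \<sigma> \<in> sqfree_veronese L d"
  unfolding sqfree_veronese_def by (rule mem_ideal_span) blast

lemma sqfree_veronese_subset_monomial_ideal:
  "sqfree_veronese L d \<subseteq> (monomial_ideal (\<lambda>a. \<exists>\<sigma>\<subseteq>L. card \<sigma> = d \<and> (\<forall>j\<in>\<sigma>. 0 < Poly_Mapping.lookup a j))
     :: ('v::finite, 'k::field) mpoly set)"
  unfolding sqfree_veronese_def
proof (rule ideal_span_subset[OF is_ideal_monomial_ideal])
  show "\<exists>\<sigma>\<subseteq>L. card \<sigma> = d \<and> (\<forall>j\<in>\<sigma>. 0 < Poly_Mapping.lookup (b + a) j)"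
    if "\<exists>\<sigma>\<subseteq>L. card \<sigma> = d \<and> (\<forall>j\<in>\<sigma>. 0 < Poly_Mapping.lookup a j)" for a b :: "'v \<Rightarrow>\<^sub>0 nat"
  proof -
    from that obtain \<sigma> where "\<sigma> \<subseteq> L" "card \<sigma> = d" "\<forall>j\<in>\<sigma>. 0 < Poly_Mapping.lookup a j"
      by blast
    then show ?thesis
      by (intro exI[of _ \<sigma>]) (auto simp: lookup_add)
  qed
  show "{sqmon \<sigma> |\<sigma>. \<sigma> \<subseteq> L \<and> card \<sigma> = d}
    \<subseteq> (monomial_ideal (\<lambda>a. \<exists>\<sigma>\<subseteq>L. card \<sigma> = d \<and> (\<forall>j\<in>\<sigma>. 0 < Poly_Mapping.lookup a j)) :: ('v, 'k) mpoly set)"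
    by (clarsimp simp: sqmon_eq_mon lookup_sqfree_exp) blast
qed

lemma card_Int_transversal:
  fixes L :: "'v::finite set"
  assumes "A \<in> transversals L d" "\<sigma> \<subseteq> L" "d \<le> card L"
  shows "card \<sigma> + 1 \<le> card (\<sigma> \<inter> A) + d"
proof -
  have "card (\<sigma> \<union> A) + card (\<sigma> \<inter> A) = card \<sigma> + card A"
    using card_Un_Int[of \<sigma> A] by simp
  moreover have "card (\<sigma> \<union> A) \<le> card L"
    using assms(1,2) by (intro card_mono) (auto simp: transversals_def)
  moreover have "card A = card L - d + 1"
    using assms(1) by (simp add: transversals_def)
  ultimately show ?thesis
    using assms(3) by linarith
qed

lemma var_ideal_subset_colon:
  fixes L :: "'v::finite set"
  assumes "A \<in> transversals L d" "1 \<le> d" "d \<le> card L"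
  shows "var_ideal A \<subseteq> {g. g * sqmon (L - A) \<in> (sqfree_veronese L d :: ('v, 'k::field) mpoly set)}"
  unfolding var_ideal_def
proof (rule ideal_span_subset[OF is_ideal_colon[OF is_ideal_sqfree_veronese]], clarify)
  fix j assume "j \<in> A"
  have "card (L - A) = d - 1"
    using assms by (auto simp: transversals_def card_Diff_subset)
  then have "card (insert j (L - A)) = d"
    using \<open>j \<in> A\<close> assms(2) by simp
  moreover have "insert j (L - A) \<subseteq> L"
    using \<open>j \<in> A\<close> assms(1) by (auto simp: transversals_def)
  ultimately show "var j * sqmon (L - A) \<in> (sqfree_veronese L d :: ('v, 'k) mpoly set)"
    using \<open>j \<in> A\<close> by (metis sqmon_insert sqmon_mem_sqfree_veronese Diff_iff finite)
qed

lemma colon_subset_var_ideal: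
  fixes L :: "'v::finite set"
  assumes "A \<in> transversals L d" "1 \<le> d" "d \<le> card L"
  shows "{g. g * sqmon (L - A) \<in> sqfree_veronese L d} \<subseteq> (var_ideal A :: ('v, 'k::field) mpoly set)"
proof
  let ?U = "\<lambda>a. \<exists>j\<in>A. 0 < Poly_Mapping.lookup a j"
  let ?e = "sqfree_exp (L - A)"
  fix g :: "('v, 'k) mpoly"
  assume "g \<in> {g. g * sqmon (L - A) \<in> sqfree_veronese L d}"
  define g0 where "g0 = restrict_keys (\<lambda>a. \<not> ?U a) g"
  have "g - g0 \<in> var_ideal A"
    unfolding g0_def var_ideal_eq_monomial_ideal by (rule diff_restrict_keys_mem)
  then have "(g - g0) * sqmon (L - A) \<in> sqfree_veronese L d"
    using var_ideal_subset_colon[OF assms] by blast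
  then have "g * sqmon (L - A) - (g - g0) * sqmon (L - A) \<in> sqfree_veronese L d"
    using \<open>g \<in> _\<close> by (intro is_ideal_diff is_ideal_sqfree_veronese) simp_all
  then have g0_mem: "g0 * mon ?e \<in> sqfree_veronese L d"
    by (simp add: algebra_simps sqmon_eq_mon)
  \<comment> \<open>A term \<open>x\<^sup>u\<close> of \<open>g0\<close> yields the term \<open>x\<^sup>u * sqmon (L - A)\<close> of an element of the ideal,
    which is therefore divisible by some \<open>sqmon \<sigma>\<close> with \<open>|\<sigma>| = d\<close>; as \<open>u\<close> avoids \<open>A\<close>, this forces
    \<open>\<sigma> \<subseteq> L - A\<close>, a set of only \<open>d - 1\<close> elements.\<close>
  show "g \<in> var_ideal A"
  proof (rule ccontr)
    assume "g \<notin> var_ideal A"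
    then have "g0 \<noteq> 0"
      using \<open>g - g0 \<in> var_ideal A\<close> by auto
    then obtain u where "u \<in> Poly_Mapping.keys g0"
      by fastforce
    then have "\<not> ?U u"
      using restrict_keys_mem unfolding g0_def monomial_ideal_def by fast
    from \<open>u \<in> _\<close> have "u + ?e \<in> Poly_Mapping.keys (g0 * mon ?e)"
      by (simp add: in_keys_iff lookup_mult_mon)
    then obtain \<sigma> where \<sigma>: "\<sigma> \<subseteq> L" "card \<sigma> = d" "\<forall>j\<in>\<sigma>. 0 < Poly_Mapping.lookup (u + ?e) j"
      using g0_mem sqfree_veronese_subset_monomial_ideal unfolding monomial_ideal_def by blast
    have "\<sigma> \<subseteq> L - A"
      using \<sigma> \<open>\<not> ?U u\<close> by (force simp: lookup_add lookup_sqfree_exp)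
    then have "card \<sigma> \<le> card L - card A"
      using card_mono[of "L - A" \<sigma>] assms(1) by (simp add: transversals_def card_Diff_subset)
    then show False
      using \<sigma>(2) assms by (simp add: transversals_def)
  qed
qed

lemma var_ideal_mem_ass_primes:
  fixes L :: "'v::finite set"
  assumes "A \<in> transversals L d" "1 \<le> d" "d \<le> card L"
  shows "(var_ideal A :: ('v, 'k::field) mpoly set) \<in> ass_primes (sqfree_veronese L d)"
  unfolding ass_primes_def
  using prime_var_ideal var_ideal_subset_colon[OF assms] colon_subset_var_ideal[OF assms] by blast

lemma ass_primes_sqfree_veronese_supset:
  fixes L :: "'v::finite set"
  assumes "Q \<in> ass_primes (sqfree_veronese L d :: ('v, 'k::field) mpoly set)" "d \<le> card L"
  shows "\<exists>A\<in>transversals L d. var_ideal A \<subseteq> Q"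
proof -
  obtain f where "prime_ideal Q" and Q_eq: "Q = {g. g * f \<in> sqfree_veronese L d}"
    using assms(1) unfolding ass_primes_def by blast
  have "sqfree_veronese L d \<subseteq> Q"
    unfolding Q_eq using is_ideal_mult_right[OF is_ideal_sqfree_veronese] by blast
  \<comment> \<open>\<open>Q\<close> contains every \<open>x\<^sub>\<sigma>\<close> with \<open>\<sigma> \<subseteq> L\<close>, \<open>|\<sigma>| = d\<close>, hence one of its variables; so fewer than
    \<open>d\<close> variables of \<open>L\<close> lie outside \<open>Q\<close>.\<close>
  define B where "B = {j\<in>L. var j \<notin> Q}"
  have "card B < d"
  proof (rule ccontr)
    assume "\<not> card B < d"
    then obtain \<sigma> where "\<sigma> \<subseteq> B" "card \<sigma> = d"
      by (meson not_less obtain_subset_with_card_n)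
    moreover have "\<sigma> \<subseteq> L"
      using \<open>\<sigma> \<subseteq> B\<close> by (auto simp: B_def)
    ultimately have "sqmon \<sigma> \<in> Q"
      using \<open>sqfree_veronese L d \<subseteq> Q\<close> sqmon_mem_sqfree_veronese[of \<sigma> L d] by blast
    then obtain j where "j \<in> \<sigma>" "var j \<in> Q"
      using prime_ideal_prod_mem[OF \<open>prime_ideal Q\<close> finite[of \<sigma>], of var] unfolding sqmon_def by blast
    then show False
      using \<open>\<sigma> \<subseteq> B\<close> by (auto simp: B_def)
  qed
  then have "card L - d + 1 \<le> card (L - B)"
    using assms(2) card_mono[of L B] by (simp add: B_def card_Diff_subset)
  then obtain A where "A \<subseteq> L - B" "card A = card L - d + 1"
    by (meson obtain_subset_with_card_n)
  moreover have "var_ideal A \<subseteq> Q"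
    unfolding var_ideal_def
    using \<open>prime_ideal Q\<close> \<open>A \<subseteq> L - B\<close>
    by (intro ideal_span_subset) (auto simp: prime_ideal_def B_def)
  ultimately show ?thesis
    by (auto simp: transversals_def)
qed

lemma symbolic_power_2_sqfree_veronese:
  fixes L :: "'v::finite set"
  assumes "1 \<le> d" "d \<le> card L"
  shows "symbolic_power (sqfree_veronese L d :: ('v, 'k::field) mpoly set) 2
    = (\<Inter>A\<in>transversals L d. ideal_pow (var_ideal A) 2)"
proof
  show "symbolic_power (sqfree_veronese L d :: ('v, 'k) mpoly set) 2
    \<subseteq> (\<Inter>A\<in>transversals L d. ideal_pow (var_ideal A) 2)"
    unfolding symbolic_power_def using var_ideal_mem_ass_primes[OF _ assms] by blast
  show "(\<Inter>A\<in>transversals L d. ideal_pow (var_ideal A) 2)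
    \<subseteq> symbolic_power (sqfree_veronese L d :: ('v, 'k) mpoly set) 2"
    unfolding symbolic_power_def
  proof (intro subsetI INT_I)
    fix x Q
    assume x: "x \<in> (\<Inter>A\<in>transversals L d. ideal_pow (var_ideal A :: ('v, 'k) mpoly set) 2)"
      and "Q \<in> ass_primes (sqfree_veronese L d :: ('v, 'k) mpoly set)"
    then obtain A where "A \<in> transversals L d" "var_ideal A \<subseteq> Q"
      using ass_primes_sqfree_veronese_supset assms(2) by blast
    then show "x \<in> ideal_pow Q 2"
      using x ideal_pow_mono[of "var_ideal A" Q 2] by blast
  qed
qed

section \<open>Generators of the symbolic square\<close>

lemma transversal_weight_cases:
  fixes w :: "'v \<Rightarrow> nat"
  assumes "finite L" "d \<le> card L" "\<forall>A\<in>transversals L d. 2 \<le> sum w A"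
  obtains \<tau> where "\<tau> \<subseteq> L" "card \<tau> = d + 1" "\<forall>j\<in>\<tau>. 0 < w j"
    | \<sigma> where "\<sigma> \<subseteq> L" "card \<sigma> = d" "\<forall>j\<in>\<sigma>. 2 \<le> w j"
proof -
  \<comment> \<open>If the support \<open>T\<close> of \<open>w\<close> had fewer than \<open>d\<close> elements, a transversal would avoid it; if it
    has exactly \<open>d\<close>, then \<open>{j} \<union> (L - T)\<close> is a transversal of weight \<open>w j\<close> for each \<open>j \<in> T\<close>.\<close>
  define T where "T = {j\<in>L. 0 < w j}"
  have "T \<subseteq> L"
    by (auto simp: T_def)
  then have card_L_T: "card (L - T) = card L - card T" and "card T \<le> card L"
    using assms(1) by (simp_all add: card_Diff_subset card_mono finite_subset)
  have w_zero: "sum w B = 0" if "B \<subseteq> L - T" for B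
    using that by (intro sum.neutral) (auto simp: T_def)
  consider "d + 1 \<le> card T" | "card T < d" | "card T = d"
    by linarith
  then show ?thesis
  proof cases
    case 1
    then obtain \<tau> where "\<tau> \<subseteq> T" "card \<tau> = d + 1"
      by (meson obtain_subset_with_card_n)
    then show ?thesis
      by (intro that(1)[of \<tau>]) (auto simp: T_def)
  next
    case 2
    then have "card L - d + 1 \<le> card (L - T)"
      using card_L_T assms(2) by linarith
    then obtain A where "A \<subseteq> L - T" "card A = card L - d + 1"
      by (meson obtain_subset_with_card_n)
    then have "A \<in> transversals L d" "sum w A = 0"
      using w_zero by (auto simp: transversals_def)
    then show ?thesis
      using assms(3) by fastforce
  next
    case 3
    have "2 \<le> w j" if "j \<in> T" for j
    proof -
      have "insert j (L - T) \<in> transversals L d"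
        using that \<open>T \<subseteq> L\<close> card_L_T 3 assms(1) by (auto simp: transversals_def)
      moreover have "sum w (insert j (L - T)) = w j"
        using that w_zero[of "L - T"] assms(1) by simp
      ultimately show ?thesis
        using assms(3) by fastforce
    qed
    then show ?thesis
      by (intro that(2)[of T]) (simp_all add: \<open>T \<subseteq> L\<close> 3)
  qed
qed

lemma symbolic_power_2_sqfree_veronese_subset:
  fixes L :: "'v::finite set"
  assumes "1 \<le> d" "d \<le> card L"
  shows "symbolic_power (sqfree_veronese L d) 2 \<subseteq> (monomial_ideal
    (\<lambda>a. \<forall>A\<in>transversals L d. 2 \<le> (\<Sum>j\<in>A. Poly_Mapping.lookup a j)) :: ('v, 'k::field) mpoly set)"
  unfolding symbolic_power_2_sqfree_veronese[OF assms]
  using var_ideal_pow_2_subset by (fastforce simp: monomial_ideal_def)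

lemma sqmon_mem_symbolic_power_2:
  fixes L :: "'v::finite set"
  assumes "\<tau> \<subseteq> L" "card \<tau> = d + 1" "1 \<le> d" "d \<le> card L"
  shows "(sqmon \<tau> :: ('v, 'k::field) mpoly) \<in> symbolic_power (sqfree_veronese L d) 2"
  unfolding symbolic_power_2_sqfree_veronese[OF assms(3,4)]
proof
  fix A assume "A \<in> transversals L d"
  then have "2 \<le> card (\<tau> \<inter> A)"
    using card_Int_transversal[of A L d \<tau>] assms by simp
  then obtain j k where "j \<in> \<tau> \<inter> A" "k \<in> \<tau> \<inter> A" "j \<noteq> k"
    by (metis card_2_iff obtain_subset_with_card_n insert_subset)
  then have "sqmon \<tau> = (var j * var k) * (sqmon (\<tau> - {j, k}) :: ('v, 'k) mpoly)"
    by (intro sqmon_remove2) auto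
  moreover have "var j * var k \<in> ideal_pow (var_ideal A :: ('v, 'k) mpoly set) 2"
    using \<open>j \<in> \<tau> \<inter> A\<close> \<open>k \<in> \<tau> \<inter> A\<close> by (intro mult_mem_ideal_pow_2 var_mem_var_ideal) auto
  ultimately show "sqmon \<tau> \<in> ideal_pow (var_ideal A :: ('v, 'k) mpoly set) 2"
    by (simp add: is_ideal_mult_right[OF is_ideal_ideal_pow])
qed

lemma symbolic_power_2_sqfree_veronese_generators:
  fixes L :: "'v::finite set"
  assumes "1 \<le> d" "d \<le> card L"
  shows "ideal_span (sqmon ` {\<tau>. \<tau> \<subseteq> L \<and> card \<tau> = d + 1} \<union> ideal_pow (sqfree_veronese L d) 2)
    = (symbolic_power (sqfree_veronese L d) 2 :: ('v, 'k::field) mpoly set)"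
    (is "ideal_span ?G = ?J")
proof
  show "ideal_span ?G \<subseteq> ?J"
    using sqmon_mem_symbolic_power_2[OF _ _ assms]
      ideal_pow_subset_symbolic_power[OF is_ideal_sqfree_veronese]
    by (intro ideal_span_subset is_ideal_symbolic_power) blast
  show "?J \<subseteq> ideal_span ?G"
  proof (rule subsetI, rule mem_ideal_if_mon_mem[OF is_ideal_ideal_span])
    fix g a
    assume "g \<in> ?J" "a \<in> Poly_Mapping.keys g"
    then have "\<forall>A\<in>transversals L d. 2 \<le> sum (Poly_Mapping.lookup a) A"
      using symbolic_power_2_sqfree_veronese_subset[OF assms] by (force simp: monomial_ideal_def)
    then show "mon a \<in> ideal_span ?G"
    proof (rule transversal_weight_cases[OF finite assms(2)])
      fix \<tau> assume \<tau>: "\<tau> \<subseteq> L" "card \<tau> = d + 1" "\<forall>j\<in>\<tau>. 0 < Poly_Mapping.lookup a j"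
      then have "mon (sqfree_exp \<tau>) \<in> ideal_span ?G"
        by (intro mem_ideal_span) (auto simp: sqmon_eq_mon[symmetric])
      then show ?thesis
        by (rule mon_mem_ideal_if_le[OF is_ideal_ideal_span]) (use \<tau> in \<open>auto simp: lookup_sqfree_exp\<close>)
    next
      fix \<sigma> assume \<sigma>: "\<sigma> \<subseteq> L" "card \<sigma> = d" "\<forall>j\<in>\<sigma>. 2 \<le> Poly_Mapping.lookup a j"
      then have "sqmon \<sigma> * sqmon \<sigma> \<in> ideal_pow (sqfree_veronese L d :: ('v, 'k) mpoly set) 2"
        by (intro mult_mem_ideal_pow_2 sqmon_mem_sqfree_veronese)
      then have "mon (sqfree_exp \<sigma> + sqfree_exp \<sigma>) \<in> ideal_span ?G"
        by (intro mem_ideal_span) (simp add: sqmon_eq_mon mon_mult)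
      then show ?thesis
        by (rule mon_mem_ideal_if_le[OF is_ideal_ideal_span])
          (use \<sigma> in \<open>auto simp: lookup_sqfree_exp lookup_add\<close>)
    qed
  qed
qed

section \<open>Minimality of the generators\<close>

lemma sum_fun_apply: "sum f A x = (\<Sum>a\<in>A. f a x)"
  by (induction A rule: infinite_finite_induct) auto

lemma card_le_if_unit_vectors_combinations:
  fixes \<phi> :: "'s \<Rightarrow> 'm \<Rightarrow> 'k::field"
  assumes "finite S"
    and "\<And>m. m \<in> M \<Longrightarrow> \<exists>c. \<forall>m'\<in>M. (\<Sum>s\<in>S. c s * \<phi> s m') = (if m' = m then 1 else 0)"
  shows "card M \<le> card S"
proof -
  interpret V: vector_space "\<lambda>c (f :: 'm \<Rightarrow> 'k) x. c * f x"
    by unfold_locales (simp_all add: fun_eq_iff algebra_simps)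
  define \<psi> where "\<psi> s = (\<lambda>x. if x \<in> M then \<phi> s x else 0)" for s
  define \<delta> where "\<delta> m = (\<lambda>x. if x = m then 1 else 0 :: 'k)" for m :: 'm
  have "\<delta> m \<in> V.span (\<psi> ` S)" if m: "m \<in> M" for m
  proof -
    obtain c where c: "\<forall>m'\<in>M. (\<Sum>s\<in>S. c s * \<phi> s m') = (if m' = m then 1 else 0)"
      using assms(2)[OF m] by blast
    have "\<delta> m x = (\<Sum>s\<in>S. c s * \<psi> s x)" for x
      by (cases "x \<in> M") (use c m in \<open>auto simp: \<delta>_def \<psi>_def\<close>)
    then have "\<delta> m = (\<Sum>s\<in>S. (\<lambda>x. c s * \<psi> s x))"
      by (simp add: fun_eq_iff sum_fun_apply)
    also have "\<dots> \<in> V.span (\<psi> ` S)"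
      by (intro V.span_sum V.span_scale V.span_base) auto
    finally show ?thesis .
  qed
  moreover have "V.independent (\<delta> ` M)"
    unfolding V.dependent_explicit
  proof clarify
    fix T u v
    assume T: "finite T" "T \<subseteq> \<delta> ` M" and sum_0: "(\<Sum>v\<in>T. (\<lambda>x. u v * v x)) = 0" and "v \<in> T" "u v \<noteq> 0"
    then obtain m where "v = \<delta> m"
      by blast
    have unit: "w m = (if w = v then 1 else 0)" if "w \<in> T" for w
      using that T(2) \<open>v = \<delta> m\<close> by (auto simp: \<delta>_def)
    have "(\<Sum>w\<in>T. u w * w m) = (\<Sum>w\<in>T. if w = v then u v else 0)"
      by (rule sum.cong) (simp_all add: unit)
    also have "\<dots> = u v"
      using T(1) \<open>v \<in> T\<close> by simp
    finally have "(\<Sum>w\<in>T. u w * w m) = u v" .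
    then show False
      using sum_0 \<open>u v \<noteq> 0\<close> by (simp add: sum_fun_apply fun_eq_iff)
  qed
  ultimately have "card (\<delta> ` M) \<le> card (\<psi> ` S)"
    using V.independent_span_bound[of "\<psi> ` S" "\<delta> ` M"] assms(1) by blast
  moreover have "inj_on \<delta> M"
    by (auto simp: inj_on_def \<delta>_def fun_eq_iff)
  ultimately show ?thesis
    using card_image_le[OF assms(1), of \<psi>] by (simp add: card_image)
qed

definition total_degree :: "('v::finite \<Rightarrow>\<^sub>0 nat) \<Rightarrow> nat" where
  "total_degree a = (\<Sum>v\<in>UNIV. Poly_Mapping.lookup a v)"

lemma total_degree_add: "total_degree (a + b) = total_degree a + total_degree b"
  by (simp add: total_degree_def lookup_add sum.distrib)

lemma total_degree_eq_0_iff: "total_degree a = 0 \<longleftrightarrow> a = 0"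
  by (auto simp: total_degree_def poly_mapping_eq_iff fun_eq_iff)

lemma total_degree_sqfree_exp: "total_degree (sqfree_exp \<sigma>) = card \<sigma>"
  by (simp add: total_degree_def lookup_sqfree_exp sum.If_cases)

lemma card_mult_le_total_degree:
  assumes "\<forall>j\<in>\<sigma>. k \<le> Poly_Mapping.lookup a j"
  shows "card \<sigma> * k \<le> total_degree a"
proof -
  have "card \<sigma> * k \<le> (\<Sum>j\<in>\<sigma>. Poly_Mapping.lookup a j)"
    using sum_bounded_below[of \<sigma> k "Poly_Mapping.lookup a"] assms by simp
  also have "\<dots> \<le> total_degree a"
    unfolding total_degree_def by (rule sum_mono2) simp_all
  finally show ?thesis .
qed

lemma is_ideal_degree_ideal: "is_ideal (monomial_ideal (\<lambda>a. D \<le> total_degree a) :: ('v::finite, 'k::field) mpoly set)"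
  by (rule is_ideal_monomial_ideal) (simp add: total_degree_add)

lemma lookup_eq_0_below_degree:
  assumes "s \<in> monomial_ideal (\<lambda>a. D \<le> total_degree a)" "total_degree m < D"
  shows "Poly_Mapping.lookup s m = 0"
  using assms by (auto simp: monomial_ideal_def simp flip: not_in_keys_iff_lookup_eq_zero)

lemma lookup_mult_at_degree:
  fixes r s :: "('v::finite, 'k::field) mpoly"
  assumes "s \<in> monomial_ideal (\<lambda>a. D \<le> total_degree a)" "total_degree m = D"
  shows "Poly_Mapping.lookup (r * s) m = Poly_Mapping.lookup r 0 * Poly_Mapping.lookup s m"
proof -
  define r' where "r' = restrict_keys (\<lambda>a. a \<noteq> 0) r"
  have "r = Poly_Mapping.single 0 (Poly_Mapping.lookup r 0) + r'"
    by (rule poly_mapping_eqI) (simp add: r'_def lookup_add lookup_single lookup_restrict_keys when_def)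
  then have "Poly_Mapping.lookup (r * s) m
      = Poly_Mapping.lookup (Poly_Mapping.single 0 (Poly_Mapping.lookup r 0) * s) m + Poly_Mapping.lookup (r' * s) m"
    by (metis distrib_right lookup_add)
  moreover have "r' * s \<in> monomial_ideal (\<lambda>a. D + 1 \<le> total_degree a)"
    unfolding r'_def
  proof (rule monomial_ideal_mult[OF restrict_keys_mem assms(1)])
    fix a b :: "'v \<Rightarrow>\<^sub>0 nat"
    assume "a \<noteq> 0" "D \<le> total_degree b"
    then show "D + 1 \<le> total_degree (a + b)"
      using total_degree_eq_0_iff[of a] by (simp add: total_degree_add)
  qed
  then have "Poly_Mapping.lookup (r' * s) m = 0"
    using assms(2) by (intro lookup_eq_0_below_degree[where D = "D + 1"]) simp_all
  ultimately show ?thesis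
    by (simp only: lookup_single_0_mult add_0_right)
qed

lemma sqfree_veronese_degree:
  "sqfree_veronese L d \<subseteq> (monomial_ideal (\<lambda>a. d \<le> total_degree a) :: ('v::finite, 'k::field) mpoly set)"
proof (rule subset_trans[OF sqfree_veronese_subset_monomial_ideal monomial_ideal_mono])
  fix a :: "'v \<Rightarrow>\<^sub>0 nat"
  assume "\<exists>\<sigma>\<subseteq>L. card \<sigma> = d \<and> (\<forall>j\<in>\<sigma>. 0 < Poly_Mapping.lookup a j)"
  then obtain \<sigma> where "card \<sigma> = d" "\<forall>j\<in>\<sigma>. 1 \<le> Poly_Mapping.lookup a j"
    by (auto simp: Suc_le_eq)
  then show "d \<le> total_degree a"
    using card_mult_le_total_degree[of \<sigma> 1 a] by simp
qed

lemma ideal_pow_2_sqfree_veronese_degree: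
  "ideal_pow (sqfree_veronese L d) 2 \<subseteq> (monomial_ideal (\<lambda>a. 2 * d \<le> total_degree a) :: ('v::finite, 'k::field) mpoly set)"
proof (rule ideal_pow_2_subset[OF is_ideal_degree_ideal])
  fix x y :: "('v, 'k) mpoly"
  assume "x \<in> sqfree_veronese L d" "y \<in> sqfree_veronese L d"
  then have "x \<in> monomial_ideal (\<lambda>a. d \<le> total_degree a)" "y \<in> monomial_ideal (\<lambda>a. d \<le> total_degree a)"
    using sqfree_veronese_degree by blast+
  then show "x * y \<in> monomial_ideal (\<lambda>a. 2 * d \<le> total_degree a)"
    by (rule monomial_ideal_mult) (simp add: total_degree_add)
qed

lemma symbolic_power_2_sqfree_veronese_degree:
  fixes L :: "'v::finite set"
  assumes "1 \<le> d" "d \<le> card L"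
  shows "symbolic_power (sqfree_veronese L d) 2
    \<subseteq> (monomial_ideal (\<lambda>a. d + 1 \<le> total_degree a) :: ('v, 'k::field) mpoly set)"
proof -
  have "d + 1 \<le> total_degree a" if "\<forall>A\<in>transversals L d. 2 \<le> sum (Poly_Mapping.lookup a) A" for a
  proof (rule transversal_weight_cases[OF finite assms(2) that])
    fix \<tau> assume "card \<tau> = d + 1" "\<forall>j\<in>\<tau>. 0 < Poly_Mapping.lookup a j"
    then show ?thesis
      using card_mult_le_total_degree[of \<tau> 1 a] by (simp add: Suc_le_eq)
  next
    fix \<sigma> assume "card \<sigma> = d" "\<forall>j\<in>\<sigma>. 2 \<le> Poly_Mapping.lookup a j"
    then show ?thesis
      using card_mult_le_total_degree[of \<sigma> 2 a] assms(1) by simp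
  qed
  then show ?thesis
    by (intro subset_trans[OF symbolic_power_2_sqfree_veronese_subset[OF assms] monomial_ideal_mono])
qed

lemma degree_part_combination:
  fixes S K :: "('v::finite, 'k::field) mpoly set"
  assumes "finite S" "S \<subseteq> monomial_ideal (\<lambda>a. D \<le> total_degree a)"
    and "K \<subseteq> monomial_ideal (\<lambda>a. D + 1 \<le> total_degree a)" "g \<in> ideal_span (S \<union> K)"
  shows "\<exists>c. \<forall>m. total_degree m = D \<longrightarrow> Poly_Mapping.lookup g m = (\<Sum>s\<in>S. c s * Poly_Mapping.lookup s m)"
proof -
  obtain F r where F: "finite F" "F \<subseteq> S \<union> K" "g = (\<Sum>s\<in>F. r s * s)"
    using assms(4) by (rule ideal_spanE)
  define c where "c s = (if s \<in> F then Poly_Mapping.lookup (r s) 0 else 0)" for s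
  have "Poly_Mapping.lookup g m = (\<Sum>s\<in>S. c s * Poly_Mapping.lookup s m)" if "total_degree m = D" for m
  proof -
    have "Poly_Mapping.lookup (r s * s) m = 0" if "s \<in> F - S" for s
    proof (rule lookup_eq_0_below_degree)
      show "r s * s \<in> monomial_ideal (\<lambda>a. D + 1 \<le> total_degree a)"
        using that F(2) assms(3) by (intro is_ideal_mult_left[OF is_ideal_degree_ideal]) auto
    qed (simp add: \<open>total_degree m = D\<close>)
    then have "Poly_Mapping.lookup g m = (\<Sum>s\<in>F \<inter> S. Poly_Mapping.lookup (r s * s) m)"
      unfolding F(3) lookup_sum by (intro sum.mono_neutral_right) (use F(1) in auto)
    also have "\<dots> = (\<Sum>s\<in>F \<inter> S. Poly_Mapping.lookup (r s) 0 * Poly_Mapping.lookup s m)"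
      using assms(2) that by (intro sum.cong lookup_mult_at_degree) auto
    also have "\<dots> = (\<Sum>s\<in>S. c s * Poly_Mapping.lookup s m)"
      using assms(1) by (auto simp: c_def sum.inter_restrict Int_commute[of F S] intro!: sum.cong)
    finally show ?thesis .
  qed
  then show ?thesis
    by blast
qed

lemma card_le_generators_symbolic_power_2:
  fixes L :: "'v::finite set" and S :: "('v, 'k::field) mpoly set"
  assumes "2 \<le> d" "d \<le> card L" "finite S" "S \<subseteq> symbolic_power (sqfree_veronese L d) 2"
    and "ideal_span (S \<union> ideal_pow (sqfree_veronese L d) 2) = symbolic_power (sqfree_veronese L d) 2"
  shows "card {\<tau>. \<tau> \<subseteq> L \<and> card \<tau> = d + 1} \<le> card S"
proof -
  let ?T = "{\<tau>. \<tau> \<subseteq> L \<and> card \<tau> = d + 1}"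
  have S_degree: "S \<subseteq> monomial_ideal (\<lambda>a. d + 1 \<le> total_degree a)"
    using assms(1,2,4) symbolic_power_2_sqfree_veronese_degree[of d L] by auto
  have square_degree: "ideal_pow (sqfree_veronese L d) 2
      \<subseteq> (monomial_ideal (\<lambda>a. d + 1 + 1 \<le> total_degree a) :: ('v, 'k) mpoly set)"
    using assms(1) by (intro subset_trans[OF ideal_pow_2_sqfree_veronese_degree monomial_ideal_mono]) simp
  have "card (sqfree_exp ` ?T) \<le> card S"
  proof (rule card_le_if_unit_vectors_combinations[OF assms(3), where \<phi> = Poly_Mapping.lookup])
    fix m assume "m \<in> sqfree_exp ` ?T"
    then obtain \<tau> where "\<tau> \<subseteq> L" "card \<tau> = d + 1" "m = sqfree_exp \<tau>"
      by blast
    then have "mon m \<in> ideal_span (S \<union> ideal_pow (sqfree_veronese L d) 2)"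
      using sqmon_mem_symbolic_power_2[of \<tau> L d] assms(1,2,5) by (simp add: sqmon_eq_mon)
    then obtain c where c: "\<forall>m'. total_degree m' = d + 1 \<longrightarrow>
        Poly_Mapping.lookup (mon m :: ('v, 'k) mpoly) m' = (\<Sum>s\<in>S. c s * Poly_Mapping.lookup s m')"
      using degree_part_combination[OF assms(3) S_degree square_degree] by blast
    show "\<exists>c. \<forall>m'\<in>sqfree_exp ` ?T. (\<Sum>s\<in>S. c s * Poly_Mapping.lookup s m') = (if m' = m then 1 else 0)"
    proof (intro exI ballI)
      fix m' assume "m' \<in> sqfree_exp ` ?T"
      then have "total_degree m' = d + 1"
        by (auto simp: total_degree_sqfree_exp)
      then show "(\<Sum>s\<in>S. c s * Poly_Mapping.lookup s m') = (if m' = m then 1 else 0)"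
        using c by (simp add: mon_def lookup_single when_def eq_commute[of m])
    qed
  qed
  moreover have "inj_on sqfree_exp ?T"
    by (simp add: inj_on_def sqfree_exp_inject)
  ultimately show ?thesis
    by (simp add: card_image)
qed

lemma sdefect_2_sqfree_veronese:
  fixes L :: "'v::finite set"
  assumes "2 \<le> d" "d \<le> card L"
  shows "sdefect (sqfree_veronese L d :: ('v, 'k::field) mpoly set) 2 = card L choose (d + 1)"
  unfolding sdefect_def
proof (rule mu_quot_eqI)
  let ?T = "{\<tau>. \<tau> \<subseteq> L \<and> card \<tau> = d + 1}"
  have "inj_on (sqmon :: 'v set \<Rightarrow> ('v, 'k) mpoly) ?T"
    by (simp add: inj_on_def sqmon_inject)
  then show "card (sqmon ` ?T :: ('v, 'k) mpoly set) = card L choose (d + 1)"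
    by (simp add: card_image n_subsets)
  show "sqmon ` ?T \<subseteq> symbolic_power (sqfree_veronese L d :: ('v, 'k) mpoly set) 2"
    using assms by (auto intro!: sqmon_mem_symbolic_power_2)
  show "ideal_span (sqmon ` ?T \<union> ideal_pow (sqfree_veronese L d) 2)
    = (symbolic_power (sqfree_veronese L d) 2 :: ('v, 'k) mpoly set)"
    using assms by (intro symbolic_power_2_sqfree_veronese_generators) simp_all
  show "card L choose (d + 1) \<le> card S"
    if "finite S" "S \<subseteq> symbolic_power (sqfree_veronese L d) 2"
      "ideal_span (S \<union> ideal_pow (sqfree_veronese L d) 2) = symbolic_power (sqfree_veronese L d) 2"
    for S :: "('v, 'k) mpoly set"
    using card_le_generators_symbolic_power_2[OF assms that] by (simp add: n_subsets)
qed simp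

section \<open>The independence complex of a star\<close>

lemma edge_ideal_star_subset:
  fixes c :: "'v::finite"
  shows "edge_ideal {{c, j} | j. j \<noteq> c} \<subseteq> (monomial_ideal
    (\<lambda>a. 0 < Poly_Mapping.lookup a c \<and> (\<exists>j\<noteq>c. 0 < Poly_Mapping.lookup a j)) :: ('v, 'k::field) mpoly set)"
  unfolding edge_ideal_def
proof (rule ideal_span_subset[OF is_ideal_monomial_ideal])
  show "0 < Poly_Mapping.lookup (b + a) c \<and> (\<exists>j\<noteq>c. 0 < Poly_Mapping.lookup (b + a) j)"
    if "0 < Poly_Mapping.lookup a c \<and> (\<exists>j\<noteq>c. 0 < Poly_Mapping.lookup a j)" for a b :: "'v \<Rightarrow>\<^sub>0 nat"
    using that by (auto simp: lookup_add)
  show "{var u * var v |u v. {u, v} \<in> {{c, j} |j. j \<noteq> c}} \<subseteq> (monomial_ideal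
    (\<lambda>a. 0 < Poly_Mapping.lookup a c \<and> (\<exists>j\<noteq>c. 0 < Poly_Mapping.lookup a j)) :: ('v, 'k) mpoly set)"
  proof clarify
    fix u v j :: 'v
    assume "{u, v} = {c, j}" "j \<noteq> c"
    then have "Poly_Mapping.single u 1 + Poly_Mapping.single v 1 = Poly_Mapping.single c 1 + Poly_Mapping.single j (1::nat)"
      by (auto simp: doubleton_eq_iff add.commute)
    then show "var u * var v \<in> (monomial_ideal
      (\<lambda>a. 0 < Poly_Mapping.lookup a c \<and> (\<exists>j\<noteq>c. 0 < Poly_Mapping.lookup a j)) :: ('v, 'k) mpoly set)"
      using \<open>j \<noteq> c\<close> by (auto simp: var_eq_mon mon_mult lookup_add)
  qed
qed

lemma sr_complex_star:
  fixes c :: "'v::finite"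
  shows "sr_complex (edge_ideal {{c, j} | j. j \<noteq> c} :: ('v, 'k::field) mpoly set) = Pow (UNIV - {c}) \<union> Pow {c}"
proof (intro set_eqI iffI)
  fix \<sigma> :: "'v set"
  assume "\<sigma> \<in> sr_complex (edge_ideal {{c, j} | j. j \<noteq> c} :: ('v, 'k) mpoly set)"
  show "\<sigma> \<in> Pow (UNIV - {c}) \<union> Pow {c}"
  proof (rule ccontr)
    assume "\<sigma> \<notin> Pow (UNIV - {c}) \<union> Pow {c}"
    then obtain j where "c \<in> \<sigma>" "j \<in> \<sigma>" "j \<noteq> c"
      by blast
    then have "sqmon \<sigma> = (var c * var j) * (sqmon (\<sigma> - {c, j}) :: ('v, 'k) mpoly)"
      by (intro sqmon_remove2) auto
    moreover have "var c * var j \<in> (edge_ideal {{c, j} | j. j \<noteq> c} :: ('v, 'k) mpoly set)"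
      unfolding edge_ideal_def using \<open>j \<noteq> c\<close> by (intro mem_ideal_span) blast
    ultimately have "sqmon \<sigma> \<in> (edge_ideal {{c, j} | j. j \<noteq> c} :: ('v, 'k) mpoly set)"
      unfolding edge_ideal_def by (simp add: is_ideal_mult_right[OF is_ideal_ideal_span])
    then show False
      using \<open>\<sigma> \<in> sr_complex _\<close> by (simp add: sr_complex_def)
  qed
next
  fix \<sigma> :: "'v set"
  assume "\<sigma> \<in> Pow (UNIV - {c}) \<union> Pow {c}"
  then have "sqmon \<sigma> \<notin> (monomial_ideal
    (\<lambda>a. 0 < Poly_Mapping.lookup a c \<and> (\<exists>j\<noteq>c. 0 < Poly_Mapping.lookup a j)) :: ('v, 'k) mpoly set)"
    by (auto simp: sqmon_eq_mon lookup_sqfree_exp)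
  then show "\<sigma> \<in> sr_complex (edge_ideal {{c, j} | j. j \<noteq> c} :: ('v, 'k) mpoly set)"
    using edge_ideal_star_subset unfolding sr_complex_def by blast
qed

lemma mem_Pow_Un_singleton_iff:
  assumes "2 \<le> card \<sigma>"
  shows "\<sigma> \<in> Pow L \<union> Pow {c} \<longleftrightarrow> \<sigma> \<subseteq> L"
  using card_mono[of "{c}" \<sigma>] assms by auto

lemma cdim_Pow_Un_singleton:
  assumes "finite L" "L \<noteq> {}"
  shows "cdim (Pow L \<union> Pow {c}) = card L - 1"
proof -
  have "Max (card ` (Pow L \<union> Pow {c})) = card L"
  proof (rule Max_eqI)
    fix x assume "x \<in> card ` (Pow L \<union> Pow {c})"
    then obtain \<sigma> where "x = card \<sigma>" "\<sigma> \<subseteq> L \<or> \<sigma> \<subseteq> {c}"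
      by blast
    moreover have "1 \<le> card L"
      using assms by (simp add: Suc_le_eq card_gt_0_iff)
    ultimately show "x \<le> card L"
      using card_mono[OF assms(1), of \<sigma>] card_mono[of "{c}" \<sigma>] by auto
  qed (use assms in auto)
  then show ?thesis
    by (simp add: cdim_def)
qed

lemma skel_ideal_Pow_Un_singleton:
  assumes "1 \<le> i"
  shows "skel_ideal (Pow L \<union> Pow {c}) i = sqfree_veronese L (i + 1)"
proof -
  have "\<sigma> \<in> Pow L \<union> Pow {c} \<and> card \<sigma> = i + 1 \<longleftrightarrow> \<sigma> \<subseteq> L \<and> card \<sigma> = i + 1" for \<sigma>
    using mem_Pow_Un_singleton_iff[of \<sigma> L c] assms by auto
  then show ?thesis
    by (simp add: skel_ideal_def sqfree_veronese_def)
qed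

lemma fvec_Pow_Un_singleton:
  assumes "finite L" "1 \<le> i"
  shows "fvec (Pow L \<union> Pow {c}) i = card L choose (i + 1)"
proof -
  have "\<sigma> \<in> Pow L \<union> Pow {c} \<and> card \<sigma> = i + 1 \<longleftrightarrow> \<sigma> \<subseteq> L \<and> card \<sigma> = i + 1" for \<sigma>
    using mem_Pow_Un_singleton_iff[of \<sigma> L c] assms by auto
  then show ?thesis
    using assms(1) by (simp add: fvec_def n_subsets)
qed

theorem corollary6p5:
  fixes c :: "'v::finite" and n :: nat
  assumes "card (UNIV :: 'v set) = n + 1" and "n \<ge> 1"
  defines "E \<equiv> {{c, j} | j. j \<noteq> c}"
  defines "\<Delta> \<equiv> sr_complex (edge_ideal E :: (('v \<Rightarrow>\<^sub>0 nat) \<Rightarrow>\<^sub>0 'k::field) set)"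
  shows "sdefect_poly TYPE('k) \<Delta> 2
           = monom 1 2 * (\<Sum>i\<in>{1..n-2}. monom (int (n choose (i + 2))) i)
       \<and> sdefect_poly TYPE('k) \<Delta> 2
           = monom 1 2 * (\<Sum>i\<in>{1..n-2}. monom (int (fvec \<Delta> (i + 1))) i)"
proof -
  define L :: "'v set" where "L = UNIV - {c}"
  have card_L: "card L = n"
    using assms(1) by (simp add: L_def card_Diff_singleton)
  have \<Delta>_eq: "\<Delta> = Pow L \<union> Pow {c}"
    unfolding \<Delta>_def E_def L_def by (rule sr_complex_star)
  have "L \<noteq> {}"
    using card_L assms(2) by auto
  then have "cdim \<Delta> - 1 = n - 2"
    using cdim_Pow_Un_singleton[of L c] card_L by (simp add: \<Delta>_eq)
  moreover have "sdefect (skel_ideal \<Delta> i :: ('v, 'k) mpoly set) 2 = n choose (i + 2)"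
    if "i \<in> {1..n-2}" for i
  proof -
    have "2 \<le> i + 1" "i + 1 \<le> card L"
      using that card_L by auto
    then show ?thesis
      using sdefect_2_sqfree_veronese[of "i + 1" L] card_L by (simp add: \<Delta>_eq skel_ideal_Pow_Un_singleton)
  qed
  moreover have "fvec \<Delta> (i + 1) = n choose (i + 2)" if "i \<in> {1..n-2}" for i
    using that fvec_Pow_Un_singleton[of L "i + 1" c] card_L by (simp add: \<Delta>_eq)
  ultimately show ?thesis
    unfolding sdefect_poly_def by (auto intro!: sum.cong arg_cong2[where f = "(*)"])
qed

end
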